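(* Let $n\ge4$ be even and let $\varphi$ be a smooth skew-morphism of $D_n$ with $\mathrm{Ker}\,\varphi=\langle a^2\rangle$ and power function $\pi$; let $k$ be the order of $\varphi$. Then there exist integers $r,s\in\{0,\dots,n/2-1\}$, $u$ with $\gcd(u,n/2)=1$, and $e,f\in\{1,\dots,k-1\}$ such that for all integers $i$: $\varphi(a^{2i})=a^{2iu}$, $\varphi(a^{2i+1})=a^{2iu+2r+1}$, $\varphi(a^{2i}b)=a^{2iu+2s}b$, $\varphi(a^{2i+1}b)=a^{2iu+2r+2s\sigma(u,e)+1}b$, and $\pi(a^{2i})\equiv1$, $\pi(a^{2i+1})\equiv e$, $\pi(a^{2i}b)\equiv f$, $\pi(a^{2i+1}b)\equiv ef\pmod k$; and the following hold: (a) $k$ is the smallest positive integer with $r\sigma(u,k)\equiv0$ and $s\sigma(u,k)\equiv0\pmod{n/2}$; (b) $\gcd(e,k)=\gcd(f,k)=1$, $e\not\equiv1$, $f\not\equiv1$, $ef\not\equiv1$, $e^2\equiv1$, $f^2\equiv1\pmod k$; (c) $u^{e-1}\equiv1$ and $u^{f-1}\equiv1\pmod{n/2}$; (d) $r\sigma(u,e-1)\equiv u-2r-1\pmod{n/2}$; (e) $s\sigma(u,f-1)\equiv0\pmod{n/2}$; (f) $r\sigma(u,f-1)+s\sigma(u,e-1)\equiv u-2r-1\pmod{n/2}$.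
   Context: $D_n=\langle a,b\mid a^n=b^2=1,\ b^{-1}ab=a^{-1}\rangle$. A skew-morphism of a finite group $A$ is a permutation $\varphi$ of the set $A$ with $\varphi(1)=1$ for which there exists a function $\pi:A\to\mathbb{Z}_k$, where $k$ is the order of $\varphi$, such that $\varphi(xy)=\varphi(x)\varphi^{\pi(x)}(y)$ for all $x,y\in A$; $\pi$ is the power function. The kernel is $\mathrm{Ker}\,\varphi=\{x:\pi(x)=1\}$, and the core is $\mathrm{Core}\,\varphi=\bigcap_{i=1}^k\varphi^i(\mathrm{Ker}\,\varphi)$. $\varphi$ is smooth if $\varphi(x)\in x\,\mathrm{Core}\,\varphi$ for all $x$. For integers $u$ and $j\ge0$, $\sigma(u,j)=\sum_{i=1}^{j}u^{i-1}$ (so $\sigma(u,0)=0$). *)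

theory Defs
  imports "HOL-Number_Theory.Number_Theory"
begin

text \<open>The dihedral group D_n of order 2n: the element a^i b^j is the pair (i mod n, j mod 2).
  Multiplication uses b^{-1} a b = a^{-1}, i.e. b a^k = a^{-k} b.\<close>

definition dih :: "nat \<Rightarrow> (int \<times> int) set" where
  "dih n = {(i, j). 0 \<le> i \<and> i < int n \<and> (j = 0 \<or> j = 1)}"

definition dmult :: "nat \<Rightarrow> int \<times> int \<Rightarrow> int \<times> int \<Rightarrow> int \<times> int" where
  "dmult n x y = ((fst x + (if snd x = 0 then fst y else - fst y)) mod int n,
                   (snd x + snd y) mod 2)"

definition delt :: "nat \<Rightarrow> int \<Rightarrow> int \<Rightarrow> int \<times> int" where
  "delt n i j = (i mod int n, j mod 2)"

definition skew_order :: "nat \<Rightarrow> (int \<times> int \<Rightarrow> int \<times> int) \<Rightarrow> nat" where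
  "skew_order n \<phi> = (LEAST k. k > 0 \<and> (\<forall>x\<in>dih n. (\<phi> ^^ k) x = x))"

text \<open>phi is a skew-morphism of D_n with power function pi (values in Z_k represented by integers).\<close>
definition skew_morphism :: "nat \<Rightarrow> (int \<times> int \<Rightarrow> int \<times> int) \<Rightarrow> (int \<times> int \<Rightarrow> int) \<Rightarrow> bool" where
  "skew_morphism n \<phi> \<pi> \<longleftrightarrow>
     bij_betw \<phi> (dih n) (dih n) \<and> \<phi> (delt n 0 0) = delt n 0 0 \<and>
     (\<forall>x\<in>dih n. \<forall>y\<in>dih n.
        \<phi> (dmult n x y) = dmult n (\<phi> x) ((\<phi> ^^ nat (\<pi> x mod int (skew_order n \<phi>))) y))"

definition skew_ker :: "nat \<Rightarrow> (int \<times> int \<Rightarrow> int \<times> int) \<Rightarrow> (int \<times> int \<Rightarrow> int) \<Rightarrow> (int \<times> int) set" where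
  "skew_ker n \<phi> \<pi> = {x \<in> dih n. [\<pi> x = 1] (mod int (skew_order n \<phi>))}"

definition skew_core :: "nat \<Rightarrow> (int \<times> int \<Rightarrow> int \<times> int) \<Rightarrow> (int \<times> int \<Rightarrow> int) \<Rightarrow> (int \<times> int) set" where
  "skew_core n \<phi> \<pi> = (\<Inter>i\<in>{1..skew_order n \<phi>}. (\<phi> ^^ i) ` skew_ker n \<phi> \<pi>)"

definition skew_smooth :: "nat \<Rightarrow> (int \<times> int \<Rightarrow> int \<times> int) \<Rightarrow> (int \<times> int \<Rightarrow> int) \<Rightarrow> bool" where
  "skew_smooth n \<phi> \<pi> \<longleftrightarrow> (\<forall>x\<in>dih n. \<exists>c\<in>skew_core n \<phi> \<pi>. \<phi> x = dmult n x c)"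

definition sigma :: "int \<Rightarrow> nat \<Rightarrow> int" where
  "sigma u j = (\<Sum>i=1..j. u ^ (i - 1))"

end

theory Submission
  imports Defs "HOL-Combinatorics.Cycles"
begin

text \<open>Smoothness puts \<open>\<phi> x\<close> in \<open>x \<langle>a\<^sup>2\<rangle>\<close>, and \<open>\<phi>\<close> is multiplicative on its kernel \<open>\<langle>a\<^sup>2\<rangle>\<close>.
  Hence \<open>\<phi>\<close> acts on \<open>\<langle>a\<^sup>2\<rangle>\<close> as \<open>a\<^sup>2\<^sup>t \<mapsto> a\<^sup>2\<^sup>t\<^sup>u\<close> and on each of the other three cosets by an
  affine map \<open>t \<mapsto> t u + c\<close>, whose iterates are \<open>t \<mapsto> t u\<^sup>j + c \<sigma>(u,j)\<close>. The power function
  is constant on cosets of the kernel and multiplicative along \<open>\<phi>\<close>-orbits on which it is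
  constant, which gives its values \<open>1, e, f, e f\<close> and \<open>e\<^sup>2 \<equiv> f\<^sup>2 \<equiv> 1\<close>. Evaluating the skew rule on
  \<open>a \<cdot> a\<^sup>2\<close>, \<open>b \<cdot> a\<^sup>2\<close>, \<open>a \<cdot> a\<close>, \<open>b \<cdot> b\<close> and \<open>b \<cdot> a\<close> yields (c)--(f), and the order \<open>k\<close> is the first
  exponent at which all four affine orbits close up, which by (d) happens exactly when
  \<open>r \<sigma>(u,j) \<equiv> s \<sigma>(u,j) \<equiv> 0\<close>.\<close>

lemma delt_in_dih: "n > 0 \<Longrightarrow> delt n i j \<in> dih n"
  by (auto simp: delt_def dih_def)

lemma dih_eq_delt: "x \<in> dih n \<Longrightarrow> x = delt n (fst x) (snd x)"
  by (auto simp: delt_def dih_def)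

lemma finite_dih: "finite (dih n)"
  unfolding dih_def by (rule finite_subset[of _ "{0..<int n} \<times> {0..1}"]) auto

lemma dmult_in_dih: "n > 0 \<Longrightarrow> dmult n x y \<in> dih n"
  by (auto simp: dmult_def dih_def)

lemma dmult_delt: "dmult n (delt n i j) (delt n i' j') =
   delt n (if j mod 2 = 0 then i + i' else i - i') (j + j')"
  by (auto simp: dmult_def delt_def mod_add_eq mod_diff_eq)

lemma delt_eq_iff: "delt n i j = delt n i' j' \<longleftrightarrow> [i = i'] (mod int n) \<and> [j = j'] (mod 2)"
  by (simp add: delt_def cong_def)

lemma delt_mod2: "delt n i 2 = delt n i 0"
  by (simp add: delt_def)

lemma dmult_assoc:
  assumes "x \<in> dih n" "y \<in> dih n" "z \<in> dih n"
  shows "dmult n (dmult n x y) z = dmult n x (dmult n y z)"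
proof -
  have "dmult n (dmult n (delt n a b) (delt n c d)) (delt n e f) =
        dmult n (delt n a b) (dmult n (delt n c d) (delt n e f))" for a b c d e f
    unfolding dmult_delt delt_eq_iff
    by (auto simp: cong_def algebra_simps) presburger+
  then show ?thesis
    using dih_eq_delt[OF assms(1)] dih_eq_delt[OF assms(2)] dih_eq_delt[OF assms(3)] by metis
qed

lemma dmult_left_cancel:
  assumes "x \<in> dih n" "y \<in> dih n" "y' \<in> dih n" "dmult n x y = dmult n x y'"
  shows "y = y'"
proof -
  have "dmult n (delt n a b) (delt n c d) = dmult n (delt n a b) (delt n c' d') \<Longrightarrow>
        delt n c d = delt n c' d'" for a b c d c' d'
    unfolding dmult_delt delt_eq_iff
    by (auto simp: cong_iff_dvd_diff split: if_splits)
       (metis dvd_diff_commute)+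
  then show ?thesis using assms dih_eq_delt by metis
qed

lemma sigma_Suc: "sigma u (Suc j) = sigma u j + u ^ j"
  by (simp add: sigma_def)

lemma sigma_0 [simp]: "sigma u 0 = 0"
  by (simp add: sigma_def)

lemma sigma_Suc': "sigma u (Suc j) = u * sigma u j + 1"
proof (induction j)
  case (Suc j)
  have "sigma u (Suc (Suc j)) = sigma u (Suc j) + u ^ Suc j" by (rule sigma_Suc)
  also have "\<dots> = u * (sigma u j + u ^ j) + 1" by (simp only: Suc.IH) (simp add: algebra_simps)
  finally show ?case by (simp add: sigma_Suc)
qed (simp add: sigma_def)

lemma sigma_geometric: "(u - 1) * sigma u j = u ^ j - 1"
  by (induction j) (auto simp: sigma_Suc algebra_simps)

lemma sigma_pred: "j \<ge> 1 \<Longrightarrow> sigma u j = sigma u (j - 1) + u ^ (j - 1)"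
  using sigma_Suc[of u "j - 1"] by simp

locale skew_morphism_dih =
  fixes n :: nat and \<phi> :: "int \<times> int \<Rightarrow> int \<times> int" and \<pi> :: "int \<times> int \<Rightarrow> int"
  assumes n_pos: "n > 0" and skew_morphism: "skew_morphism n \<phi> \<pi>"
begin

abbreviation "D \<equiv> dih n"

definition k where "k = skew_order n \<phi>"

definition pi_nat where "pi_nat x = nat (\<pi> x mod int k)"

lemma delt_in_D [simp]: "delt n i j \<in> D"
  using delt_in_dih n_pos by blast

lemma dmult_in_D [simp]: "dmult n x y \<in> D"
  using dmult_in_dih n_pos by blast

lemma phi_bij: "bij_betw \<phi> D D"
  using skew_morphism unfolding skew_morphism_def by blast

lemma phi_in_D: "x \<in> D \<Longrightarrow> \<phi> x \<in> D"
  using phi_bij bij_betwE by blast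

lemma funpow_in_D: "x \<in> D \<Longrightarrow> (\<phi> ^^ j) x \<in> D"
  by (induction j) (auto intro: phi_in_D)

lemma phi_one: "\<phi> (delt n 0 0) = delt n 0 0"
  using skew_morphism unfolding skew_morphism_def by blast

lemma phi_dmult: "x \<in> D \<Longrightarrow> y \<in> D \<Longrightarrow> \<phi> (dmult n x y) = dmult n (\<phi> x) ((\<phi> ^^ pi_nat x) y)"
  using skew_morphism unfolding skew_morphism_def pi_nat_def k_def by blast

lemma funpow_funpow: "(\<phi> ^^ a) ((\<phi> ^^ b) x) = (\<phi> ^^ (a + b)) x"
  by (simp add: funpow_add)

lemma phi_periodic: "\<exists>j>0. \<forall>x\<in>D. (\<phi> ^^ j) x = x"
proof -
  define \<psi> where "\<psi> = (\<lambda>x. if x \<in> D then \<phi> x else x)"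
  have "bij_betw \<psi> D D"
    using phi_bij unfolding \<psi>_def by (rule bij_betw_cong[THEN iffD1, rotated]) auto
  then have "\<psi> permutes D" by (rule bij_imp_permutes) (simp add: \<psi>_def)
  then have "permutation \<psi>" using permutation_permutes finite_dih by blast
  then obtain j where j: "\<psi> ^^ j = id" "j > 0" by (rule permutation_is_nilpotent)
  have "x \<in> D \<Longrightarrow> (\<psi> ^^ i) x = (\<phi> ^^ i) x" for x i
    by (induction i) (auto simp: \<psi>_def funpow_in_D)
  then show ?thesis using j by (metis id_apply)
qed

lemma k_pos: "k > 0" and funpow_k: "x \<in> D \<Longrightarrow> (\<phi> ^^ k) x = x"
  using LeastI_ex[OF phi_periodic] unfolding k_def skew_order_def by auto

lemma funpow_less_k: "0 < j \<Longrightarrow> j < k \<Longrightarrow> \<exists>x\<in>D. (\<phi> ^^ j) x \<noteq> x"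
  using not_less_Least[of j "\<lambda>k. k > 0 \<and> (\<forall>x\<in>D. (\<phi> ^^ k) x = x)"]
  unfolding k_def skew_order_def by auto

lemma funpow_mult_k: "x \<in> D \<Longrightarrow> (\<phi> ^^ (k * q)) x = x"
  by (induction q) (simp_all add: funpow_add funpow_k funpow_in_D)

lemma funpow_mod_k: "x \<in> D \<Longrightarrow> (\<phi> ^^ j) x = (\<phi> ^^ (j mod k)) x"
  using funpow_mult_k[of x "j div k"] funpow_add[of "j mod k" "k * (j div k)" \<phi>] by simp

lemma funpow_eq_on_D_imp_eq:
  assumes "p < k" "q < k" and eq: "\<And>z. z \<in> D \<Longrightarrow> (\<phi> ^^ p) z = (\<phi> ^^ q) z"
  shows "p = q"
proof -
  have False if less: "p' < q'" "q' < k" and eq': "\<And>z. z \<in> D \<Longrightarrow> (\<phi> ^^ p') z = (\<phi> ^^ q') z" for p' q'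
  proof -
    have "(\<phi> ^^ (q' - p')) z = z" if z: "z \<in> D" for z
    proof -
      have "(\<phi> ^^ (q' - p')) z = (\<phi> ^^ (q' - p' + k)) z"
        using funpow_k[OF z] funpow_funpow[of "q' - p'" k z] by simp
      also have "q' - p' + k = (k - p') + q'" using less by simp
      also have "(\<phi> ^^ (k - p' + q')) z = (\<phi> ^^ (k - p')) ((\<phi> ^^ p') z)"
        using eq' z by (simp flip: funpow_funpow)
      also have "\<dots> = z" using funpow_k[OF z] less by (simp add: funpow_funpow)
      finally show ?thesis .
    qed
    moreover have "0 < q' - p'" "q' - p' < k" using less by auto
    ultimately show False using funpow_less_k by blast
  qed
  then show ?thesis using assms by (metis linorder_neqE_nat)
qed

lemma pi_nat_less: "pi_nat x < k"
  using k_pos unfolding pi_nat_def by (simp add: nat_less_iff)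

lemma pi_cong_pi_nat: "[\<pi> x = int (pi_nat x)] (mod int k)"
  using k_pos unfolding pi_nat_def cong_def by simp

lemma skew_ker_iff: "x \<in> skew_ker n \<phi> \<pi> \<longleftrightarrow> x \<in> D \<and> [\<pi> x = 1] (mod int k)"
  unfolding skew_ker_def k_def by simp

lemma skew_core_subset_ker: "skew_core n \<phi> \<pi> \<subseteq> skew_ker n \<phi> \<pi>"
proof
  fix c assume "c \<in> skew_core n \<phi> \<pi>"
  then have "c \<in> (\<phi> ^^ k) ` skew_ker n \<phi> \<pi>"
    unfolding skew_core_def k_def[symmetric] using k_pos by auto
  then show "c \<in> skew_ker n \<phi> \<pi>" using funpow_k skew_ker_iff by auto
qed

lemma phi_dmult_ker:
  "x \<in> D \<Longrightarrow> y \<in> D \<Longrightarrow> pi_nat x = 1 \<Longrightarrow> \<phi> (dmult n x y) = dmult n (\<phi> x) (\<phi> y)"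
  using phi_dmult by simp

lemma pi_nat_dmult_ker:
  assumes x: "x \<in> D" and y: "y \<in> D" and ker: "pi_nat x = 1"
  shows "pi_nat (dmult n x y) = pi_nat y"
proof -
  have "(\<phi> ^^ pi_nat (dmult n x y)) z = (\<phi> ^^ pi_nat y) z" if z: "z \<in> D" for z
  proof -
    have "dmult n (\<phi> (dmult n x y)) ((\<phi> ^^ pi_nat (dmult n x y)) z)
        = \<phi> (dmult n (dmult n x y) z)" by (rule phi_dmult[symmetric]) (simp_all add: z)
    also have "\<dots> = \<phi> (dmult n x (dmult n y z))" by (simp only: dmult_assoc[OF x y z])
    also have "\<dots> = dmult n (\<phi> x) (dmult n (\<phi> y) ((\<phi> ^^ pi_nat y) z))"
      by (simp only: phi_dmult_ker[OF x dmult_in_D ker] phi_dmult[OF y z])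
    also have "\<dots> = dmult n (\<phi> (dmult n x y)) ((\<phi> ^^ pi_nat y) z)"
      by (simp only: dmult_assoc[OF phi_in_D[OF x] phi_in_D[OF y] funpow_in_D[OF z]]
          phi_dmult_ker[OF x y ker])
    finally show ?thesis
      by (rule dmult_left_cancel[OF phi_in_D[OF dmult_in_D] funpow_in_D[OF z] funpow_in_D[OF z]])
  qed
  then show ?thesis using funpow_eq_on_D_imp_eq pi_nat_less by blast
qed

lemma funpow_dmult_const_pi:
  assumes y: "y \<in> D" and c: "\<And>l. pi_nat ((\<phi> ^^ l) y) = c" and z: "z \<in> D"
  shows "(\<phi> ^^ j) (dmult n y z) = dmult n ((\<phi> ^^ j) y) ((\<phi> ^^ (j * c)) z)"
proof (induction j)
  case (Suc j)
  have "(\<phi> ^^ Suc j) (dmult n y z) = \<phi> (dmult n ((\<phi> ^^ j) y) ((\<phi> ^^ (j * c)) z))"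
    by (simp add: Suc)
  also have "\<dots> = dmult n ((\<phi> ^^ Suc j) y) ((\<phi> ^^ c) ((\<phi> ^^ (j * c)) z))"
    using phi_dmult[OF funpow_in_D[OF y] funpow_in_D[OF z]] by (simp only: c funpow.simps o_apply)
  also have "(\<phi> ^^ c) ((\<phi> ^^ (j * c)) z) = (\<phi> ^^ (Suc j * c)) z"
    by (simp add: funpow_add)
  finally show ?case .
qed simp

lemma pi_nat_dmult_const_pi:
  assumes x: "x \<in> D" and y: "y \<in> D" and c: "\<And>l. pi_nat ((\<phi> ^^ l) y) = c"
  shows "pi_nat (dmult n x y) = (pi_nat x * c) mod k"
proof -
  have "(\<phi> ^^ pi_nat (dmult n x y)) z = (\<phi> ^^ ((pi_nat x * c) mod k)) z" if z: "z \<in> D" for z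
  proof -
    have "dmult n (\<phi> (dmult n x y)) ((\<phi> ^^ pi_nat (dmult n x y)) z)
        = \<phi> (dmult n (dmult n x y) z)" by (rule phi_dmult[symmetric]) (simp_all add: z)
    also have "\<dots> = \<phi> (dmult n x (dmult n y z))" by (simp only: dmult_assoc[OF x y z])
    also have "\<dots> = dmult n (\<phi> x) (dmult n ((\<phi> ^^ pi_nat x) y) ((\<phi> ^^ (pi_nat x * c)) z))"
      by (simp only: phi_dmult[OF x dmult_in_D] funpow_dmult_const_pi[OF y c z])
    also have "\<dots> = dmult n (dmult n (\<phi> x) ((\<phi> ^^ pi_nat x) y)) ((\<phi> ^^ (pi_nat x * c)) z)"
      by (simp only: dmult_assoc[OF phi_in_D[OF x] funpow_in_D[OF y] funpow_in_D[OF z]])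
    also have "\<dots> = dmult n (\<phi> (dmult n x y)) ((\<phi> ^^ ((pi_nat x * c) mod k)) z)"
      by (simp only: phi_dmult[OF x y, symmetric] funpow_mod_k[OF z, of "pi_nat x * c"])
    finally show ?thesis
      by (rule dmult_left_cancel[OF phi_in_D[OF dmult_in_D] funpow_in_D[OF z] funpow_in_D[OF z]])
  qed
  then show ?thesis using funpow_eq_on_D_imp_eq[OF pi_nat_less] k_pos by simp
qed

end

lemma funpow_affine:
  fixes g :: "int \<Rightarrow> 'a"
  assumes "\<And>t. \<phi> (g t) = g (t * u + c)"
  shows "(\<phi> ^^ j) (g t) = g (t * u ^ j + c * sigma u j)"
proof (induction j arbitrary: t)
  case (Suc j)
  have "(\<phi> ^^ Suc j) (g t) = g ((t * u ^ j + c * sigma u j) * u + c)" using Suc assms by simp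
  also have "(t * u ^ j + c * sigma u j) * u + c = t * u ^ Suc j + c * sigma u (Suc j)"
    by (simp add: sigma_Suc' algebra_simps)
  finally show ?case .
qed simp

locale smooth_skew_morphism_ker_a2 = skew_morphism_dih +
  assumes n_ge_4: "n \<ge> 4" and even_n: "even n" and smooth: "skew_smooth n \<phi> \<pi>"
    and ker: "skew_ker n \<phi> \<pi> = {delt n (2*i) 0 | i. True}"
begin

definition m where "m = int n div 2"

definition "rot_even t = delt n (2*t) 0"
definition "rot_odd t = delt n (2*t+1) 0"
definition "refl_even t = delt n (2*t) 1"
definition "refl_odd t = delt n (2*t+1) 1"
lemmas coset_defs = rot_even_def rot_odd_def refl_even_def refl_odd_def

lemma int_n_eq: "int n = 2 * m"
  using even_n unfolding m_def by auto

lemma m_pos: "m > 0"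
  using n_ge_4 int_n_eq by simp

lemma coset_eq_iff:
  "rot_even x = rot_even y \<longleftrightarrow> [x = y] (mod m)" "rot_odd x = rot_odd y \<longleftrightarrow> [x = y] (mod m)"
  "refl_even x = refl_even y \<longleftrightarrow> [x = y] (mod m)" "refl_odd x = refl_odd y \<longleftrightarrow> [x = y] (mod m)"
proof -
  have "[2*x + a = 2*y + a] (mod int n) \<longleftrightarrow> [x = y] (mod m)" for a
  proof -
    have "2*x + a - (2*y + a) = 2 * (x - y)" by simp
    then show ?thesis
      unfolding int_n_eq cong_iff_dvd_diff using dvd_mult_cancel_left[of 2 m "x - y"] by simp
  qed
  from this[of 0] this[of 1] show
    "rot_even x = rot_even y \<longleftrightarrow> [x = y] (mod m)" "rot_odd x = rot_odd y \<longleftrightarrow> [x = y] (mod m)"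
    "refl_even x = refl_even y \<longleftrightarrow> [x = y] (mod m)" "refl_odd x = refl_odd y \<longleftrightarrow> [x = y] (mod m)"
    by (simp_all add: coset_defs delt_eq_iff)
qed

lemma coset_mod_m:
  "rot_odd (t mod m) = rot_odd t" "refl_even (t mod m) = refl_even t"
  by (simp_all add: coset_eq_iff cong_def)

lemma dih_cosets: "x \<in> D \<Longrightarrow> \<exists>t. x = rot_even t \<or> x = rot_odd t \<or> x = refl_even t \<or> x = refl_odd t"
proof -
  assume x: "x \<in> D"
  have "snd x = 0 \<or> snd x = 1" using x by (auto simp: dih_def)
  moreover have "fst x = 2 * (fst x div 2) \<or> fst x = 2 * (fst x div 2) + 1" by presburger
  ultimately show ?thesis using dih_eq_delt[OF x] unfolding coset_defs by metis
qed

lemma dmult_cosets: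
 "dmult n (rot_even x) (rot_even y) = rot_even (x+y)"
 "dmult n (rot_even x) (rot_odd y) = rot_odd (x+y)"
 "dmult n (rot_even x) (refl_even y) = refl_even (x+y)"
 "dmult n (rot_even x) (refl_odd y) = refl_odd (x+y)"
 "dmult n (rot_odd x) (rot_even y) = rot_odd (x+y)"
 "dmult n (rot_odd x) (rot_odd y) = rot_even (x+y+1)"
 "dmult n (rot_odd x) (refl_even y) = refl_odd (x+y)"
 "dmult n (refl_even x) (rot_even y) = refl_even (x-y)"
 "dmult n (refl_even x) (rot_odd y) = refl_odd (x-y-1)"
 "dmult n (refl_even x) (refl_even y) = rot_even (x-y)"
  by (simp_all add: coset_defs dmult_delt delt_mod2 algebra_simps)

lemma coset_in_D [simp]: "rot_even t \<in> D" "rot_odd t \<in> D" "refl_even t \<in> D" "refl_odd t \<in> D"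
  by (simp_all add: coset_defs)

lemma rot_even_in_ker: "[\<pi> (rot_even t) = 1] (mod int k)"
  using ker skew_ker_iff unfolding rot_even_def by blast

lemma rot_odd_notin_ker: "rot_odd t \<notin> skew_ker n \<phi> \<pi>"
proof
  assume "rot_odd t \<in> skew_ker n \<phi> \<pi>"
  then obtain i where "delt n (2*t+1) 0 = delt n (2*i) 0" using ker by (auto simp: rot_odd_def)
  then have "[2*t+1 = 2*i] (mod 2 * m)" by (simp add: delt_eq_iff int_n_eq)
  then have "[2*t+1 = 2*i] (mod 2)" by (rule cong_dvd_modulus) simp
  then show False by (simp add: cong_iff_dvd_diff)
qed

lemma refl_notin_ker: "delt n j 1 \<notin> skew_ker n \<phi> \<pi>"
  using ker by (auto simp: delt_def)

lemma k_ge_2: "k \<ge> 2"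
proof (rule ccontr)
  assume "\<not> k \<ge> 2"
  then have "k = 1" using k_pos by simp
  then have "rot_odd 0 \<in> skew_ker n \<phi> \<pi>" unfolding skew_ker_iff by (simp add: cong_def)
  then show False using rot_odd_notin_ker by simp
qed

lemma pi_nat_rot_even: "pi_nat (rot_even t) = 1"
  using rot_even_in_ker[of t] k_ge_2 unfolding pi_nat_def cong_def by simp

text \<open>Since the core lies in the kernel \<open>\<langle>a\<^sup>2\<rangle>\<close>, smoothness keeps every element in its coset.\<close>
lemma phi_delt_shift: "\<exists>c. \<phi> (delt n t j) = delt n (t + 2 * c) j"
proof -
  obtain c where c: "c \<in> skew_core n \<phi> \<pi>" "\<phi> (delt n t j) = dmult n (delt n t j) c"
    using smooth delt_in_D unfolding skew_smooth_def by blast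
  then obtain i where "c = delt n (2*i) 0" using skew_core_subset_ker ker by blast
  with c have shift: "\<phi> (delt n t j) = delt n (if j mod 2 = 0 then t + 2 * i else t - 2 * i) j"
    by (simp add: dmult_delt)
  show ?thesis
  proof (cases "j mod 2 = 0")
    case False
    then have "\<phi> (delt n t j) = delt n (t + 2 * (-i)) j" using shift by simp
    then show ?thesis by blast
  qed (use shift in auto)
qed

lemma phi_rot_even_dmult: "y \<in> D \<Longrightarrow> \<phi> (dmult n (rot_even t) y) = dmult n (\<phi> (rot_even t)) (\<phi> y)"
  using phi_dmult_ker pi_nat_rot_even by simp

definition u where "u = (SOME u. \<phi> (rot_even 1) = rot_even u)"
definition r where "r = (SOME r. 0 \<le> r \<and> r < m \<and> \<phi> (rot_odd 0) = rot_odd r)"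
definition s where "s = (SOME s. 0 \<le> s \<and> s < m \<and> \<phi> (refl_even 0) = refl_even s)"

lemma phi_rot_even_1: "\<phi> (rot_even 1) = rot_even u"
proof -
  obtain c where "\<phi> (delt n 2 0) = delt n (2 + 2 * c) 0" using phi_delt_shift by blast
  then have "\<phi> (rot_even 1) = rot_even (1 + c)" by (simp add: rot_even_def)
  then show ?thesis unfolding u_def by (rule someI)
qed

lemma r_range: "0 \<le> r" "r < m" and phi_rot_odd_0: "\<phi> (rot_odd 0) = rot_odd r"
proof -
  obtain c where "\<phi> (delt n 1 0) = delt n (1 + 2 * c) 0" using phi_delt_shift by blast
  then have "\<phi> (rot_odd 0) = rot_odd c" by (simp add: rot_odd_def add.commute)
  then have "\<phi> (rot_odd 0) = rot_odd (c mod m)" by (simp add: coset_mod_m)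
  then have "0 \<le> c mod m \<and> c mod m < m \<and> \<phi> (rot_odd 0) = rot_odd (c mod m)" using m_pos by simp
  then have "0 \<le> r \<and> r < m \<and> \<phi> (rot_odd 0) = rot_odd r" unfolding r_def by (rule someI)
  then show "0 \<le> r" "r < m" "\<phi> (rot_odd 0) = rot_odd r" by auto
qed

lemma s_range: "0 \<le> s" "s < m" and phi_refl_even_0: "\<phi> (refl_even 0) = refl_even s"
proof -
  obtain c where "\<phi> (delt n 0 1) = delt n (0 + 2 * c) 1" using phi_delt_shift by blast
  then have "\<phi> (refl_even 0) = refl_even c" by (simp add: refl_even_def)
  then have "\<phi> (refl_even 0) = refl_even (c mod m)" by (simp add: coset_mod_m)
  then have "0 \<le> c mod m \<and> c mod m < m \<and> \<phi> (refl_even 0) = refl_even (c mod m)" using m_pos by simp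
  then have "0 \<le> s \<and> s < m \<and> \<phi> (refl_even 0) = refl_even s" unfolding s_def by (rule someI)
  then show "0 \<le> s" "s < m" "\<phi> (refl_even 0) = refl_even s" by auto
qed

lemma phi_rot_even: "\<phi> (rot_even t) = rot_even (t * u)"
proof -
  have nat_case: "\<phi> (rot_even (int j)) = rot_even (int j * u)" for j
  proof (induction j)
    case (Suc j)
    have "\<phi> (rot_even (int (Suc j))) = \<phi> (dmult n (rot_even 1) (rot_even (int j)))"
      by (simp add: dmult_cosets)
    also have "\<dots> = dmult n (rot_even u) (rot_even (int j * u))"
      by (simp only: phi_rot_even_dmult[OF coset_in_D(1)] Suc.IH phi_rot_even_1)
    finally show ?case by (simp add: dmult_cosets algebra_simps)
  qed (use phi_one in \<open>simp add: rot_even_def\<close>)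
  have "rot_even (int (nat (t mod m))) = rot_even t" using m_pos by (simp add: coset_eq_iff cong_def)
  then have "\<phi> (rot_even t) = rot_even (int (nat (t mod m)) * u)" using nat_case by metis
  also have "\<dots> = rot_even (t * u)" using m_pos by (simp add: coset_eq_iff cong_def mod_mult_left_eq)
  finally show ?thesis .
qed

lemma phi_rot_odd: "\<phi> (rot_odd t) = rot_odd (t * u + r)"
  using phi_rot_even_dmult[of "rot_odd 0" t]
  by (simp add: dmult_cosets phi_rot_even phi_rot_odd_0)

lemma phi_refl_even: "\<phi> (refl_even t) = refl_even (t * u + s)"
  using phi_rot_even_dmult[of "refl_even 0" t]
  by (simp add: dmult_cosets phi_rot_even phi_refl_even_0)

definition e where "e = pi_nat (rot_odd 0)"
definition f where "f = pi_nat (refl_even 0)"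

lemma funpow_rot_even: "(\<phi> ^^ j) (rot_even t) = rot_even (t * u ^ j)"
  using funpow_affine[of \<phi> rot_even u 0] phi_rot_even by simp

lemma funpow_rot_odd: "(\<phi> ^^ j) (rot_odd t) = rot_odd (t * u ^ j + r * sigma u j)"
  using funpow_affine[of \<phi> rot_odd u r] phi_rot_odd by simp

lemma funpow_refl_even: "(\<phi> ^^ j) (refl_even t) = refl_even (t * u ^ j + s * sigma u j)"
  using funpow_affine[of \<phi> refl_even u s] phi_refl_even by simp

lemma phi_dmult_rot_odd: "y \<in> D \<Longrightarrow> \<phi> (dmult n (rot_odd 0) y) = dmult n (rot_odd r) ((\<phi> ^^ e) y)"
  using phi_dmult[of "rot_odd 0" y] phi_rot_odd_0 unfolding e_def by simp

lemma phi_dmult_refl_even: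
  "y \<in> D \<Longrightarrow> \<phi> (dmult n (refl_even 0) y) = dmult n (refl_even s) ((\<phi> ^^ f) y)"
  using phi_dmult[of "refl_even 0" y] phi_refl_even_0 unfolding f_def by simp

lemma phi_refl_odd: "\<phi> (refl_odd t) = refl_odd (t * u + (r + s * sigma u e))"
proof -
  have "\<phi> (refl_odd 0) = refl_odd (r + s * sigma u e)"
    using phi_dmult_rot_odd[of "refl_even 0"] by (simp add: dmult_cosets funpow_refl_even)
  then show ?thesis
    using phi_rot_even_dmult[of "refl_odd 0" t] by (simp add: dmult_cosets phi_rot_even)
qed

lemma funpow_refl_odd:
  "(\<phi> ^^ j) (refl_odd t) = refl_odd (t * u ^ j + (r + s * sigma u e) * sigma u j)"
  using funpow_affine[of \<phi> refl_odd u "r + s * sigma u e"] phi_refl_odd by simp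

lemma pi_nat_rot_odd: "pi_nat (rot_odd t) = e"
  using pi_nat_dmult_ker[of "rot_even t" "rot_odd 0"] pi_nat_rot_even
  unfolding e_def by (simp add: dmult_cosets)

lemma pi_nat_refl_even: "pi_nat (refl_even t) = f"
  using pi_nat_dmult_ker[of "rot_even t" "refl_even 0"] pi_nat_rot_even
  unfolding f_def by (simp add: dmult_cosets)

lemma pi_nat_refl_odd: "pi_nat (refl_odd t) = (e * f) mod k"
proof -
  have "pi_nat (dmult n (rot_odd 0) (refl_even 0)) = (pi_nat (rot_odd 0) * f) mod k"
    by (rule pi_nat_dmult_const_pi) (auto simp: funpow_refl_even pi_nat_refl_even)
  then have "pi_nat (refl_odd 0) = (e * f) mod k" by (simp add: dmult_cosets e_def)
  then show ?thesis
    using pi_nat_dmult_ker[of "rot_even t" "refl_odd 0"] pi_nat_rot_even by (simp add: dmult_cosets)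
qed

lemma e_squared: "(e * e) mod k = 1"
proof -
  have "pi_nat (dmult n (rot_odd 0) (rot_odd 0)) = (pi_nat (rot_odd 0) * e) mod k"
    by (rule pi_nat_dmult_const_pi) (auto simp: funpow_rot_odd pi_nat_rot_odd)
  then show ?thesis by (simp add: dmult_cosets pi_nat_rot_even e_def)
qed

lemma f_squared: "(f * f) mod k = 1"
proof -
  have "pi_nat (dmult n (refl_even 0) (refl_even 0)) = (pi_nat (refl_even 0) * f) mod k"
    by (rule pi_nat_dmult_const_pi) (auto simp: funpow_refl_even pi_nat_refl_even)
  then show ?thesis by (simp add: dmult_cosets pi_nat_rot_even f_def)
qed

lemma e_range: "1 \<le> e" "e < k" and f_range: "1 \<le> f" "f < k"
proof -
  have "e \<noteq> 0" "f \<noteq> 0" using e_squared f_squared by (metis mod_0 mult_0 zero_neq_one)+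
  then show "1 \<le> e" "1 \<le> f" by simp_all
  show "e < k" "f < k" unfolding e_def f_def by (rule pi_nat_less)+
qed

lemma pi_table:
  "[\<pi> (rot_even t) = 1] (mod int k)" "[\<pi> (rot_odd t) = int e] (mod int k)"
  "[\<pi> (refl_even t) = int f] (mod int k)" "[\<pi> (refl_odd t) = int e * int f] (mod int k)"
  using rot_even_in_ker pi_cong_pi_nat[of "rot_odd t"] pi_cong_pi_nat[of "refl_even t"]
    pi_cong_pi_nat[of "refl_odd t"]
  by (simp_all add: pi_nat_rot_odd pi_nat_refl_even pi_nat_refl_odd cong_def zmod_int)

lemma e_not_1: "\<not> [int e = 1] (mod int k)"
proof
  assume "[int e = 1] (mod int k)"
  then have "rot_odd 0 \<in> skew_ker n \<phi> \<pi>"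
    using cong_trans[OF pi_table(2)] skew_ker_iff by simp
  then show False using rot_odd_notin_ker by blast
qed

lemma f_not_1: "\<not> [int f = 1] (mod int k)"
proof
  assume "[int f = 1] (mod int k)"
  then have "refl_even 0 \<in> skew_ker n \<phi> \<pi>"
    using cong_trans[OF pi_table(3)] skew_ker_iff by simp
  then show False using refl_notin_ker unfolding refl_even_def by blast
qed

lemma ef_not_1: "\<not> [int e * int f = 1] (mod int k)"
proof
  assume "[int e * int f = 1] (mod int k)"
  then have "refl_odd 0 \<in> skew_ker n \<phi> \<pi>"
    using cong_trans[OF pi_table(4)] skew_ker_iff by simp
  then show False using refl_notin_ker unfolding refl_odd_def by blast
qed

lemma square_mod_k_1:
  assumes "(a * a) mod k = 1"
  shows "[int a ^ 2 = 1] (mod int k)" and "gcd (int a) (int k) = 1"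
proof -
  have "int a ^ 2 mod int k = int ((a * a) mod k)" by (simp add: power2_eq_square of_nat_mod)
  also have "\<dots> = 1 mod int k" using assms k_ge_2 by simp
  finally show sq: "[int a ^ 2 = 1] (mod int k)" unfolding cong_def .
  have "coprime (int a * int a) (int k)"
    using cong_imp_coprime[of 1 "int a * int a" "int k"] sq by (simp add: cong_sym power2_eq_square)
  then show "gcd (int a) (int k) = 1" by simp
qed

text \<open>\<open>\<phi>\<close> is injective on \<open>\<langle>a\<^sup>2\<rangle>\<close>, where it acts as \<open>t \<mapsto> t u\<close> on \<open>\<int>/m\<close>.\<close>
lemma u_coprime: "gcd u m = 1"
proof (rule ccontr)
  assume "gcd u m \<noteq> 1"
  define g where "g = gcd u m"
  have "g > 0" using m_pos unfolding g_def by simp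
  then have g: "g \<ge> 2" using \<open>gcd u m \<noteq> 1\<close> unfolding g_def by linarith
  obtain t where t: "m = g * t" unfolding g_def by (meson gcd_dvd2 dvdE)
  obtain v where v: "u = g * v" unfolding g_def by (meson gcd_dvd1 dvdE)
  have "0 < t" "t < m" using t g m_pos by (simp_all add: zero_less_mult_iff)
  have "[t * u = 0 * u] (mod m)" using t v by (simp add: cong_iff_dvd_diff)
  then have "\<phi> (rot_even t) = \<phi> (rot_even 0)" using phi_rot_even coset_eq_iff by metis
  then have "rot_even t = rot_even 0" using bij_betw_imp_inj_on[OF phi_bij] by (simp add: inj_on_def)
  then have "m dvd t" by (simp add: coset_eq_iff cong_iff_dvd_diff)
  then show False using \<open>0 < t\<close> \<open>t < m\<close> zdvd_imp_le by fastforce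
qed

lemma pow_cong_self_imp_pred: "[u ^ j = u] (mod m) \<Longrightarrow> j \<ge> 1 \<Longrightarrow> [u ^ (j - 1) = 1] (mod m)"
  using cong_mult_lcancel[of u m "u ^ (j - 1)" 1] u_coprime
  by (simp add: coprime_iff_gcd_eq_1 power_eq_if split: if_splits)

lemma u_pow_e: "[u ^ (e - 1) = 1] (mod m)"
proof -
  have "\<phi> (rot_odd 1) = rot_odd (r + u ^ e)"
    using phi_dmult_rot_odd[of "rot_even 1"] by (simp add: dmult_cosets funpow_rot_even)
  then have "[r + u = r + u ^ e] (mod m)" by (simp add: phi_rot_odd coset_eq_iff add.commute)
  then have "[u ^ e = u] (mod m)" by (simp add: cong_add_lcancel cong_sym_eq)
  then show ?thesis using e_range(1) by (rule pow_cong_self_imp_pred)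
qed

lemma u_pow_f: "[u ^ (f - 1) = 1] (mod m)"
proof -
  have "\<phi> (refl_even (-1)) = refl_even (s - u ^ f)"
    using phi_dmult_refl_even[of "rot_even 1"] by (simp add: dmult_cosets funpow_rot_even)
  then have "[-u + s = s - u ^ f] (mod m)" by (simp add: phi_refl_even coset_eq_iff)
  then have "[u ^ f = u] (mod m)" by (simp add: cong_iff_dvd_diff dvd_diff_commute)
  then show ?thesis using f_range(1) by (rule pow_cong_self_imp_pred)
qed

lemma relation_a_a: "[u = r + r * sigma u e + 1] (mod m)"
proof -
  have "\<phi> (rot_even 1) = rot_even (r + r * sigma u e + 1)"
    using phi_dmult_rot_odd[of "rot_odd 0"] by (simp add: dmult_cosets funpow_rot_odd)
  then show ?thesis by (simp add: phi_rot_even_1 coset_eq_iff)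
qed

lemma relation_b_b: "[0 = s - s * sigma u f] (mod m)"
proof -
  have "\<phi> (rot_even 0) = rot_even (s - s * sigma u f)"
    using phi_dmult_refl_even[of "refl_even 0"] by (simp add: dmult_cosets funpow_refl_even)
  then show ?thesis by (simp add: phi_rot_even coset_eq_iff)
qed

lemma relation_b_a: "[-u + (r + s * sigma u e) = s - r * sigma u f - 1] (mod m)"
proof -
  have "\<phi> (refl_odd (-1)) = refl_odd (s - r * sigma u f - 1)"
    using phi_dmult_refl_even[of "rot_odd 0"] by (simp add: dmult_cosets funpow_rot_odd)
  then show ?thesis by (simp add: phi_refl_odd coset_eq_iff)
qed

lemma relation_d: "[r * sigma u (e - 1) = u - 2*r - 1] (mod m)"
proof -
  have "r * sigma u (e - 1) - (u - 2*r - 1) = - (u - (r + r * sigma u e + 1)) - r * (u ^ (e - 1) - 1)"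
    using sigma_pred[OF e_range(1), of u] by (simp add: algebra_simps)
  moreover have "m dvd - (u - (r + r * sigma u e + 1)) - r * (u ^ (e - 1) - 1)"
    using relation_a_a u_pow_e unfolding cong_iff_dvd_diff
    by (simp only: dvd_diff dvd_minus_iff dvd_mult)
  ultimately show ?thesis unfolding cong_iff_dvd_diff by (simp only:)
qed

lemma relation_e: "[s * sigma u (f - 1) = 0] (mod m)"
proof -
  have "s * sigma u (f - 1) - 0 = (0 - (s - s * sigma u f)) - s * (u ^ (f - 1) - 1)"
    using sigma_pred[OF f_range(1), of u] by (simp add: algebra_simps)
  moreover have "m dvd (0 - (s - s * sigma u f)) - s * (u ^ (f - 1) - 1)"
    using relation_b_b u_pow_f unfolding cong_iff_dvd_diff
    by (simp only: dvd_diff dvd_minus_iff dvd_mult)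
  ultimately show ?thesis unfolding cong_iff_dvd_diff by (simp only:)
qed

lemma relation_f: "[r * sigma u (f - 1) + s * sigma u (e - 1) = u - 2*r - 1] (mod m)"
proof -
  have "r * sigma u (f - 1) + s * sigma u (e - 1) - (u - 2*r - 1) =
     ((-u + (r + s * sigma u e)) - (s - r * sigma u f - 1))
       - s * (u ^ (e - 1) - 1) - r * (u ^ (f - 1) - 1)"
    using sigma_pred[OF e_range(1), of u] sigma_pred[OF f_range(1), of u]
    by (simp add: algebra_simps)
  moreover have "m dvd ((-u + (r + s * sigma u e)) - (s - r * sigma u f - 1))
       - s * (u ^ (e - 1) - 1) - r * (u ^ (f - 1) - 1)"
    using relation_b_a u_pow_e u_pow_f unfolding cong_iff_dvd_diff
    by (simp only: dvd_diff dvd_minus_iff dvd_mult)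
  ultimately show ?thesis unfolding cong_iff_dvd_diff by (simp only:)
qed

lemma sigma_k: "[r * sigma u k = 0] (mod m)" "[s * sigma u k = 0] (mod m)"
  using funpow_rot_odd[of k 0] funpow_k[of "rot_odd 0"]
    funpow_refl_even[of k 0] funpow_k[of "refl_even 0"]
  by (simp_all add: coset_eq_iff cong_sym_eq)

text \<open>By (d) and \<open>(u - 1) \<sigma>(u,j) = u\<^sup>j - 1\<close>, \<open>r \<sigma>(u,j) \<equiv> 0\<close> already forces \<open>u\<^sup>j \<equiv> 1\<close>, so then
  all four affine orbits close up after \<open>j\<close> steps.\<close>
lemma sigma_less_k: "0 < j \<Longrightarrow> j < k \<Longrightarrow> \<not> ([r * sigma u j = 0] (mod m) \<and> [s * sigma u j = 0] (mod m))"
proof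
  assume j: "0 < j" "j < k" and "[r * sigma u j = 0] (mod m) \<and> [s * sigma u j = 0] (mod m)"
  then have hr: "m dvd r * sigma u j" and hs: "m dvd s * sigma u j"
    by (auto simp: cong_iff_dvd_diff)
  have "u ^ j - 1 = (u - (r + r * sigma u e + 1)) * sigma u j + (1 + sigma u e) * (r * sigma u j)"
    using sigma_geometric[of u j] by (simp add: algebra_simps)
  moreover have "m dvd (u - (r + r * sigma u e + 1)) * sigma u j + (1 + sigma u e) * (r * sigma u j)"
    using relation_a_a hr by (simp add: cong_iff_dvd_diff)
  ultimately have uj: "m dvd t * (u ^ j - 1)" for t by simp
  have "(r + s * sigma u e) * sigma u j = r * sigma u j + sigma u e * (s * sigma u j)"
    by (simp add: algebra_simps)
  then have hrs: "m dvd (r + s * sigma u e) * sigma u j"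
    using hr hs by (simp only: dvd_add dvd_mult)
  have affine_id: "[t * u ^ j + c * sigma u j = t] (mod m)" if "m dvd c * sigma u j" for t c
  proof -
    have "t * u ^ j + c * sigma u j - t = t * (u ^ j - 1) + c * sigma u j"
      by (simp add: algebra_simps)
    then show ?thesis unfolding cong_iff_dvd_diff using uj[of t] that by (simp only: dvd_add)
  qed
  have "(\<phi> ^^ j) x = x" if "x \<in> D" for x
    using dih_cosets[OF that] affine_id[of 0] affine_id[OF hr] affine_id[OF hs] affine_id[OF hrs]
    by (auto simp: funpow_rot_even funpow_rot_odd funpow_refl_even funpow_refl_odd coset_eq_iff)
  then show False using funpow_less_k[OF j] by blast
qed

lemma phi_pi_table:
  "\<phi> (delt n (2*i) 0) = delt n (2*i*u) 0 \<and>
   \<phi> (delt n (2*i+1) 0) = delt n (2*i*u + 2*r + 1) 0 \<and>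
   \<phi> (delt n (2*i) 1) = delt n (2*i*u + 2*s) 1 \<and>
   \<phi> (delt n (2*i+1) 1) = delt n (2*i*u + 2*r + 2*s*sigma u e + 1) 1 \<and>
   [\<pi> (delt n (2*i) 0) = 1] (mod int k) \<and>
   [\<pi> (delt n (2*i+1) 0) = int e] (mod int k) \<and>
   [\<pi> (delt n (2*i) 1) = int f] (mod int k) \<and>
   [\<pi> (delt n (2*i+1) 1) = int e * int f] (mod int k)"
  using phi_rot_even[of i] phi_rot_odd[of i] phi_refl_even[of i] phi_refl_odd[of i] pi_table[of i]
  by (simp add: coset_defs algebra_simps)

end

theorem theorem5:
  fixes n :: nat and \<phi> :: "int \<times> int \<Rightarrow> int \<times> int" and \<pi> :: "int \<times> int \<Rightarrow> int"
  assumes "n \<ge> 4" and "even n"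
    and "skew_morphism n \<phi> \<pi>"
    and "skew_smooth n \<phi> \<pi>"
    and "skew_ker n \<phi> \<pi> = {delt n (2 * i) 0 | i. True}"
  defines "k \<equiv> skew_order n \<phi>" and "m \<equiv> int n div 2"
  shows "\<exists>r s u :: int. \<exists>e f :: nat.
     0 \<le> r \<and> r < m \<and> 0 \<le> s \<and> s < m \<and> gcd u m = 1 \<and>
     1 \<le> e \<and> e \<le> k - 1 \<and> 1 \<le> f \<and> f \<le> k - 1 \<and>
     (\<forall>i::int.
        \<phi> (delt n (2*i) 0) = delt n (2*i*u) 0 \<and>
        \<phi> (delt n (2*i+1) 0) = delt n (2*i*u + 2*r + 1) 0 \<and>
        \<phi> (delt n (2*i) 1) = delt n (2*i*u + 2*s) 1 \<and>
        \<phi> (delt n (2*i+1) 1) = delt n (2*i*u + 2*r + 2*s*sigma u e + 1) 1 \<and>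
        [\<pi> (delt n (2*i) 0) = 1] (mod int k) \<and>
        [\<pi> (delt n (2*i+1) 0) = int e] (mod int k) \<and>
        [\<pi> (delt n (2*i) 1) = int f] (mod int k) \<and>
        [\<pi> (delt n (2*i+1) 1) = int e * int f] (mod int k)) \<and>
     (k > 0 \<and> [r * sigma u k = 0] (mod m) \<and> [s * sigma u k = 0] (mod m) \<and>
        (\<forall>j::nat. 0 < j \<and> j < k \<longrightarrow>
           \<not> ([r * sigma u j = 0] (mod m) \<and> [s * sigma u j = 0] (mod m)))) \<and>
     (gcd (int e) (int k) = 1 \<and> gcd (int f) (int k) = 1 \<and>
        \<not> [int e = 1] (mod int k) \<and> \<not> [int f = 1] (mod int k) \<and>
        \<not> [int e * int f = 1] (mod int k) \<and>
        [int e ^ 2 = 1] (mod int k) \<and> [int f ^ 2 = 1] (mod int k)) \<and>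
     ([u ^ (e - 1) = 1] (mod m) \<and> [u ^ (f - 1) = 1] (mod m)) \<and>
     [r * sigma u (e - 1) = u - 2*r - 1] (mod m) \<and>
     [s * sigma u (f - 1) = 0] (mod m) \<and>
     [r * sigma u (f - 1) + s * sigma u (e - 1) = u - 2*r - 1] (mod m)"
proof -
  interpret S: smooth_skew_morphism_ker_a2 n \<phi> \<pi>
    using assms(1-5) by unfold_locales simp_all
  have "S.k = k" "S.m = m" unfolding S.k_def S.m_def k_def m_def by simp_all
  then show ?thesis
    using S.r_range S.s_range S.u_coprime S.e_range S.f_range S.phi_pi_table S.k_pos
      S.sigma_k S.sigma_less_k S.square_mod_k_1[OF S.e_squared] S.square_mod_k_1[OF S.f_squared]
      S.e_not_1 S.f_not_1 S.ef_not_1 S.u_pow_e S.u_pow_f S.relation_d S.relation_e S.relation_f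
    by (intro exI[of _ S.r] exI[of _ S.s] exI[of _ S.u] exI[of _ S.e] exI[of _ S.f]) auto
qed

end
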